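(* Let $n$ be even, $V=V_1\sqcup V_2$ with $|V_1|=|V_2|=n/2$, and $0\le q<p\le 1$. Consider the complete weighted graph on $V$ with $w(u,v)=p$ for distinct $u,v$ in the same block, $w(u,v)=q$ for $u,v$ in different blocks, and $w(v,v)=0$. Let $\mathcal P$ be the set of all cuts $\{A,A^\complement\}$ with $A\subseteq V$, with cost $c(\{A,A^\complement\})=\sum_{u\in A,v\in A^\complement}w(u,v)$, and for $\Psi\in\mathbb R$ let $\mathcal P_\Psi=\{P\in\mathcal P: c(P)\le\Psi\}$. If the agreement parameter satisfies $a\ge2$ and $p<2q$, then for every $\Psi\in\mathbb R$ there exists at most one $\mathcal P_\Psi$-tangle.
   Context: An orientation of a set of cuts chooses one side of every cut in it. An orientation $O$ of $\mathcal P_\Psi$ is a $\mathcal P_\Psi$-tangle if for all (not necessarily distinct) chosen sides $A,B,C\in O$ we have $|A\cap B\cap C|\ge a$, where $a\in\mathbb N$ is the agreement parameter. *)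

theory Defs
  imports Complex_Main
begin

definition sbm_weight :: "'a set \<Rightarrow> 'a set \<Rightarrow> real \<Rightarrow> real \<Rightarrow> 'a \<Rightarrow> 'a \<Rightarrow> real" where
  "sbm_weight V1 V2 p q u v =
     (if u = v then 0
      else if (u \<in> V1 \<and> v \<in> V1) \<or> (u \<in> V2 \<and> v \<in> V2) then p
      else q)"

definition all_cuts :: "'a set \<Rightarrow> 'a set set set" where
  "all_cuts V = {{A, V - A} | A. A \<subseteq> V}"

definition cut_cost :: "('a \<Rightarrow> 'a \<Rightarrow> real) \<Rightarrow> 'a set \<Rightarrow> 'a set \<Rightarrow> real" where
  "cut_cost w V A = (\<Sum>u\<in>A. \<Sum>v\<in>V - A. w u v)"

text \<open>Cost of a cut P = {A, V - A} (well defined for symmetric w).\<close>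
definition cost_of_cut :: "('a \<Rightarrow> 'a \<Rightarrow> real) \<Rightarrow> 'a set \<Rightarrow> 'a set set \<Rightarrow> real" where
  "cost_of_cut w V P = cut_cost w V (SOME A. A \<in> P)"

definition cuts_le :: "('a \<Rightarrow> 'a \<Rightarrow> real) \<Rightarrow> 'a set \<Rightarrow> real \<Rightarrow> 'a set set set" where
  "cuts_le w V \<Psi> = {P \<in> all_cuts V. cost_of_cut w V P \<le> \<Psi>}"

definition is_orientation :: "'a set set set \<Rightarrow> 'a set set \<Rightarrow> bool" where
  "is_orientation S Or \<longleftrightarrow> (\<forall>A\<in>Or. \<exists>P\<in>S. A \<in> P) \<and> (\<forall>P\<in>S. card (Or \<inter> P) = 1)"

definition is_tangle :: "nat \<Rightarrow> 'a set set set \<Rightarrow> 'a set set \<Rightarrow> bool" where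
  "is_tangle a S Or \<longleftrightarrow> is_orientation S Or \<and>
     (\<forall>A\<in>Or. \<forall>B\<in>Or. \<forall>C\<in>Or. card (A \<inter> B \<inter> C) \<ge> a)"

end

(*
  A side X of a cut with at most half of the vertices can be split into two sides Y, Z \<subseteq> X
  of no larger cost that miss at most one vertex of X: if X meets both blocks take its two
  block parts, otherwise take two halves of X. The condition p \<le> 2q is what keeps the cost
  from growing under both operations. Since a \<ge> 2, a tangle containing X must contain Y or Z
  (otherwise it contains X, V - Y and V - Z, which share at most one vertex), so descending on
  |X| leads to a side with at most one vertex, which a tangle cannot contain. Hence every tangle
  orients each cut towards its strictly larger side, and this determines the tangle.
*)
theory Submission
  imports Defs
begin

lemma orientation_meets_cut:
  assumes "is_orientation S Or" "P \<in> S"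
  shows "\<exists>A\<in>P. A \<in> Or"
proof -
  have "card (Or \<inter> P) = 1" using assms unfolding is_orientation_def by blast
  then have "Or \<inter> P \<noteq> {}" by force
  then show ?thesis by blast
qed

lemma orientations_eqI:
  assumes Or1: "is_orientation S Or1" and Or2: "is_orientation S Or2"
    and same_side: "\<And>P A B. P \<in> S \<Longrightarrow> A \<in> P \<Longrightarrow> B \<in> P \<Longrightarrow> A \<in> Or1 \<Longrightarrow> B \<in> Or2 \<Longrightarrow> A = B"
  shows "Or1 = Or2"
proof (intro equalityI subsetI)
  fix A assume "A \<in> Or1"
  moreover obtain P where "P \<in> S" "A \<in> P"
    using Or1 \<open>A \<in> Or1\<close> unfolding is_orientation_def by blast
  moreover obtain B where "B \<in> P" "B \<in> Or2"
    using orientation_meets_cut[OF Or2 \<open>P \<in> S\<close>] by blast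
  ultimately show "A \<in> Or2" using same_side by blast
next
  fix B assume "B \<in> Or2"
  moreover obtain P where "P \<in> S" "B \<in> P"
    using Or2 \<open>B \<in> Or2\<close> unfolding is_orientation_def by blast
  moreover obtain A where "A \<in> P" "A \<in> Or1"
    using orientation_meets_cut[OF Or1 \<open>P \<in> S\<close>] by blast
  ultimately show "B \<in> Or1" using same_side by metis
qed

lemma tangle_excludes_splittable_sides:
  assumes tangle: "is_tangle a S Or" and "2 \<le> a"
    and split: "\<And>X. X \<in> Or \<Longrightarrow> Q X \<Longrightarrow> 2 \<le> card X \<Longrightarrow>
      \<exists>Y Z. Q Y \<and> Q Z \<and> card Y < card X \<and> card Z < card X \<and> {Y, V - Y} \<in> S \<and> {Z, V - Z} \<in> S
        \<and> card (X \<inter> (V - Y) \<inter> (V - Z)) < 2"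
  shows "X \<in> Or \<Longrightarrow> \<not> Q X"
proof (induction "card X" arbitrary: X rule: less_induct)
  case less
  have orient: "is_orientation S Or"
    and triple: "\<And>A B C. A \<in> Or \<Longrightarrow> B \<in> Or \<Longrightarrow> C \<in> Or \<Longrightarrow> a \<le> card (A \<inter> B \<inter> C)"
    using tangle unfolding is_tangle_def by blast+
  show ?case
  proof
    assume "Q X"
    have "2 \<le> card X" using triple[OF less.prems less.prems less.prems] \<open>2 \<le> a\<close> by simp
    then obtain Y Z where "Q Y" "Q Z" "card Y < card X" "card Z < card X"
      and cuts: "{Y, V - Y} \<in> S" "{Z, V - Z} \<in> S" and rest: "card (X \<inter> (V - Y) \<inter> (V - Z)) < 2"
      using split[OF less.prems \<open>Q X\<close>] by blast
    then have "Y \<notin> Or" "Z \<notin> Or" using less.hyps by blast+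
    then have "V - Y \<in> Or" "V - Z \<in> Or"
      using orientation_meets_cut[OF orient cuts(1)] orientation_meets_cut[OF orient cuts(2)] by auto
    then show False using triple[OF less.prems] rest \<open>2 \<le> a\<close> by fastforce
  qed
qed

lemma cut_cost_complement:
  assumes "\<And>u v. w u v = w v u" "A \<subseteq> V"
  shows "cut_cost w V (V - A) = cut_cost w V A"
proof -
  have "V - (V - A) = A" using assms(2) by blast
  then show ?thesis unfolding cut_cost_def using assms(1) by (simp add: sum.swap[of _ A])
qed

lemma cost_of_cut_side:
  assumes "\<And>u v. w u v = w v u" "P \<in> all_cuts V" "X \<in> P"
  shows "cost_of_cut w V P = cut_cost w V X"
proof -
  obtain A where A: "A \<subseteq> V" "P = {A, V - A}" using assms(2) unfolding all_cuts_def by blast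
  have "(SOME A. A \<in> P) \<in> P" using assms(3) by (rule someI)
  then show ?thesis
    unfolding cost_of_cut_def using A assms(3) cut_cost_complement[OF assms(1) A(1)] by auto
qed

lemma side_of_cuts_le:
  assumes "\<And>u v. w u v = w v u" "P \<in> cuts_le w V \<Psi>" "X \<in> P"
  shows "X \<subseteq> V" "P = {X, V - X}" "cut_cost w V X \<le> \<Psi>"
proof -
  have P: "P \<in> all_cuts V" "cost_of_cut w V P \<le> \<Psi>" using assms(2) unfolding cuts_le_def by auto
  then obtain A where "A \<subseteq> V" "P = {A, V - A}" unfolding all_cuts_def by blast
  then show "X \<subseteq> V" "P = {X, V - X}" using assms(3) by auto
  show "cut_cost w V X \<le> \<Psi>" using P cost_of_cut_side[OF assms(1) P(1) assms(3)] by simp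
qed

lemma cut_in_cuts_le:
  assumes "\<And>u v. w u v = w v u" "A \<subseteq> V" "cut_cost w V A \<le> \<Psi>"
  shows "{A, V - A} \<in> cuts_le w V \<Psi>"
proof -
  have "{A, V - A} \<in> all_cuts V" using assms(2) unfolding all_cuts_def by blast
  then show ?thesis
    unfolding cuts_le_def using cost_of_cut_side[OF assms(1), of _ _ A] assms(3) by auto
qed

lemma obtain_halves:
  assumes "finite X"
  obtains Y Z where "Y \<subseteq> X" "Z \<subseteq> X" "card Y = card X div 2" "card Z = card X div 2"
    "card (X - Y - Z) \<le> 1"
proof -
  obtain Y where Y: "Y \<subseteq> X" "card Y = card X div 2"
    using obtain_subset_with_card_n[of "card X div 2" X] by auto
  have card_XY: "card (X - Y) = card X - card X div 2"
    using Y assms by (simp add: card_Diff_subset finite_subset)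
  then have "card X div 2 \<le> card (X - Y)" by simp
  then obtain Z where Z: "Z \<subseteq> X - Y" "card Z = card X div 2"
    by (rule obtain_subset_with_card_n)
  have "card (X - Y - Z) = card (X - Y) - card Z"
    using Z assms by (simp add: card_Diff_subset finite_subset)
  then have "card (X - Y - Z) \<le> 1" using card_XY Z(2) by linarith
  with Y Z show thesis using that by blast
qed

lemma real_card_Diff:
  assumes "finite A"
  shows "real (card (A - X)) = real (card A) - card (X \<inter> A)"
proof -
  have "card (A - X) = card A - card (A \<inter> X)" using assms by (simp add: card_Diff_subset_Int)
  moreover have "card (A \<inter> X) \<le> card A" using assms by (simp add: card_mono)
  ultimately show ?thesis by (simp add: Int_commute of_nat_diff)
qed

definition two_block_cut_cost :: "real \<Rightarrow> real \<Rightarrow> real \<Rightarrow> real \<Rightarrow> real \<Rightarrow> real" where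
  "two_block_cut_cost m p q k1 k2 = k1 * (p * (m - k1) + q * (m - k2)) + k2 * (p * (m - k2) + q * (m - k1))"

lemma two_block_cut_cost_commute:
  "two_block_cut_cost m p q k1 k2 = two_block_cut_cost m p q k2 k1"
  unfolding two_block_cut_cost_def by simp

lemma two_block_cut_cost_half_le:
  assumes "0 \<le> j" "2 * j \<le> k" "k \<le> m" "0 \<le> p" "p \<le> 2 * q"
  shows "two_block_cut_cost m p q j 0 \<le> two_block_cut_cost m p q k 0"
proof -
  have "p * (m - k - j) \<ge> p * (- m / 2)" using assms by (intro mult_left_mono) auto
  moreover have "q * m \<ge> (p / 2) * m" using assms by (intro mult_right_mono) auto
  ultimately have "(k - j) * (p * (m - k - j) + q * m) \<ge> 0" using assms by (intro mult_nonneg_nonneg) auto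
  then show ?thesis unfolding two_block_cut_cost_def by (simp add: algebra_simps)
qed

lemma two_block_cut_cost_mono:
  assumes "0 \<le> k1" "0 \<le> k2" "k1 + k2 \<le> m" "0 \<le> q" "q \<le> p" "p \<le> 2 * q"
  shows "two_block_cut_cost m p q k1 0 \<le> two_block_cut_cost m p q k1 k2"
proof -
  have "q * (m - 2 * k1) \<ge> q * (2 * k2 - m)" using assms by (intro mult_left_mono) auto
  moreover have "(p - q) * m \<ge> 0" "(2 * q - p) * k2 \<ge> 0" using assms by auto
  ultimately have "k2 * (p * (m - k2) + q * (m - 2 * k1)) \<ge> 0"
    using assms by (intro mult_nonneg_nonneg) (auto simp: algebra_simps)
  then show ?thesis unfolding two_block_cut_cost_def by (simp add: algebra_simps)
qed

lemma sbm_weight_sym: "sbm_weight V1 V2 p q u v = sbm_weight V1 V2 p q v u"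
  unfolding sbm_weight_def by auto

lemma sbm_weight_swap: "sbm_weight V1 V2 p q = sbm_weight V2 V1 p q"
  unfolding sbm_weight_def by (intro ext) auto

lemma sum_sbm_weight:
  assumes "finite V1" "finite V2" "V1 \<inter> V2 = {}" "B \<subseteq> V1 \<union> V2" "u \<in> V1" "u \<notin> B"
  shows "(\<Sum>v\<in>B. sbm_weight V1 V2 p q u v) = p * card (B \<inter> V1) + q * card (B \<inter> V2)"
proof -
  have "B = (B \<inter> V1) \<union> (B \<inter> V2)" "(B \<inter> V1) \<inter> (B \<inter> V2) = {}" using assms(3,4) by auto
  then have "(\<Sum>v\<in>B. sbm_weight V1 V2 p q u v)
      = (\<Sum>v\<in>B \<inter> V1. sbm_weight V1 V2 p q u v) + (\<Sum>v\<in>B \<inter> V2. sbm_weight V1 V2 p q u v)"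
    using assms(1,2) by (metis finite_Int sum.union_disjoint)
  also have "\<dots> = (\<Sum>v\<in>B \<inter> V1. p) + (\<Sum>v\<in>B \<inter> V2. q)"
    using assms(3,5,6) by (intro arg_cong2[where f = "(+)"] sum.cong) (auto simp: sbm_weight_def)
  finally show ?thesis by simp
qed

locale two_block_graph =
  fixes V1 V2 :: "'a set" and m :: nat and p q :: real
  assumes finite_V1: "finite V1" and finite_V2: "finite V2" and disjoint: "V1 \<inter> V2 = {}"
    and card_V1: "card V1 = m" and card_V2: "card V2 = m"
begin

abbreviation "V \<equiv> V1 \<union> V2"
abbreviation "w \<equiv> sbm_weight V1 V2 p q"

lemma card_V: "card V = 2 * m"
  using finite_V1 finite_V2 disjoint card_V1 card_V2 by (simp add: card_Un_disjoint)

lemma cut_cost_eq: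
  assumes "X \<subseteq> V"
  shows "cut_cost w V X = two_block_cut_cost m p q (card (X \<inter> V1)) (card (X \<inter> V2))"
proof -
  have rest: "(V - X) \<inter> V1 = V1 - X" "(V - X) \<inter> V2 = V2 - X" by auto
  have "X = (X \<inter> V1) \<union> (X \<inter> V2)" "(X \<inter> V1) \<inter> (X \<inter> V2) = {}" using assms disjoint by auto
  then have "cut_cost w V X = (\<Sum>u\<in>X \<inter> V1. \<Sum>v\<in>V - X. w u v) + (\<Sum>u\<in>X \<inter> V2. \<Sum>v\<in>V - X. w u v)"
    unfolding cut_cost_def using finite_V1 finite_V2 by (metis finite_Int sum.union_disjoint)
  also have "\<dots> = (\<Sum>u\<in>X \<inter> V1. p * card (V1 - X) + q * card (V2 - X))
                  + (\<Sum>u\<in>X \<inter> V2. p * card (V2 - X) + q * card (V1 - X))"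
  proof (intro arg_cong2[where f = "(+)"] sum.cong refl)
    fix u assume "u \<in> X \<inter> V1"
    then show "(\<Sum>v\<in>V - X. w u v) = p * card (V1 - X) + q * card (V2 - X)"
      using sum_sbm_weight[OF finite_V1 finite_V2 disjoint, of "V - X" u p q] by (simp add: rest)
  next
    fix u assume "u \<in> X \<inter> V2"
    then show "(\<Sum>v\<in>V - X. w u v) = p * card (V2 - X) + q * card (V1 - X)"
      using sum_sbm_weight[OF finite_V2 finite_V1 _, of "V - X" u p q] disjoint
      by (simp add: rest sbm_weight_swap[of V1] Un_commute inf_commute[of V2 V1])
  qed
  finally show ?thesis
    using real_card_Diff[OF finite_V1, of X] real_card_Diff[OF finite_V2, of X] card_V1 card_V2
    unfolding two_block_cut_cost_def by simp
qed

lemma cut_cost_in_block: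
  assumes "X \<subseteq> V1 \<or> X \<subseteq> V2"
  shows "cut_cost w V X = two_block_cut_cost m p q (card X) 0"
proof -
  have "X \<subseteq> V" using assms by blast
  moreover have "X \<inter> V1 = X \<and> X \<inter> V2 = {} \<or> X \<inter> V1 = {} \<and> X \<inter> V2 = X" using assms disjoint by blast
  ultimately show ?thesis using cut_cost_eq two_block_cut_cost_commute by (metis card.empty of_nat_0)
qed

lemma small_side_split:
  assumes "0 \<le> q" "q \<le> p" "p \<le> 2 * q" "X \<subseteq> V" "2 \<le> card X" "card X \<le> m"
  obtains Y Z where "Y \<subseteq> X" "Z \<subseteq> X" "card Y < card X" "card Z < card X"
    "cut_cost w V Y \<le> cut_cost w V X" "cut_cost w V Z \<le> cut_cost w V X" "card (X - Y - Z) \<le> 1"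
proof (cases "X \<subseteq> V1 \<or> X \<subseteq> V2")
  case True
  have "finite X" using assms(4) finite_V1 finite_V2 finite_subset by blast
  then obtain Y Z where halves: "Y \<subseteq> X" "Z \<subseteq> X" "card Y = card X div 2" "card Z = card X div 2"
    "card (X - Y - Z) \<le> 1" by (rule obtain_halves)
  have "cut_cost w V W \<le> cut_cost w V X" if "W \<subseteq> X" "card W = card X div 2" for W
  proof -
    have "two_block_cut_cost m p q (card W) 0 \<le> two_block_cut_cost m p q (card X) 0"
      using that assms by (intro two_block_cut_cost_half_le) linarith+
    then show ?thesis using cut_cost_in_block True that(1) by (metis subset_trans)
  qed
  moreover have "card X div 2 < card X" using assms(5) by simp
  ultimately show thesis using that halves by auto
next
  case False
  let ?k1 = "card (X \<inter> V1)" and ?k2 = "card (X \<inter> V2)"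
  have X: "X = (X \<inter> V1) \<union> (X \<inter> V2)" "(X \<inter> V1) \<inter> (X \<inter> V2) = {}"
    using assms(4) disjoint by auto
  have "X \<inter> V1 \<noteq> {}" "X \<inter> V2 \<noteq> {}" using False assms(4) by auto
  then have card_X: "card X = ?k1 + ?k2" "0 < ?k1" "0 < ?k2"
    using X finite_V1 finite_V2 by (metis card_Un_disjoint finite_Int card_gt_0_iff)+
  have "two_block_cut_cost m p q ?k1 0 \<le> two_block_cut_cost m p q ?k1 ?k2"
    "two_block_cut_cost m p q ?k2 0 \<le> two_block_cut_cost m p q ?k2 ?k1"
    using assms card_X by (intro two_block_cut_cost_mono; simp)+
  then have "cut_cost w V (X \<inter> V1) \<le> cut_cost w V X" "cut_cost w V (X \<inter> V2) \<le> cut_cost w V X"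
    using cut_cost_eq[OF assms(4)] cut_cost_in_block two_block_cut_cost_commute by auto
  moreover have "X - (X \<inter> V1) - (X \<inter> V2) = {}" using X by blast
  ultimately show thesis using that card_X by (metis Int_lower1 card.empty less_add_same_cancel1
      less_add_same_cancel2 zero_le_one)
qed

lemma tangle_side_large:
  assumes "0 \<le> q" "q \<le> p" "p \<le> 2 * q" "2 \<le> a"
    and tangle: "is_tangle a (cuts_le w V \<Psi>) Or" and "A \<in> Or"
  shows "m < card A"
proof -
  have "\<not> card A \<le> m"
  proof (rule tangle_excludes_splittable_sides[OF tangle \<open>2 \<le> a\<close> _ \<open>A \<in> Or\<close>])
    fix X assume "X \<in> Or" "card X \<le> m" "2 \<le> card X"
    obtain P where "P \<in> cuts_le w V \<Psi>" "X \<in> P"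
      using tangle \<open>X \<in> Or\<close> unfolding is_tangle_def is_orientation_def by blast
    note side = side_of_cuts_le(1,3)[where w = w, OF sbm_weight_sym this]
    obtain Y Z where "Y \<subseteq> X" "Z \<subseteq> X" "card Y < card X" "card Z < card X"
      "cut_cost w V Y \<le> cut_cost w V X" "cut_cost w V Z \<le> cut_cost w V X" "card (X - Y - Z) \<le> 1"
      using small_side_split[OF assms(1-3) side(1) \<open>2 \<le> card X\<close> \<open>card X \<le> m\<close>] .
    moreover have "{W, V - W} \<in> cuts_le w V \<Psi>"
      if "W \<subseteq> X" "cut_cost w V W \<le> cut_cost w V X" for W
      using that side by (intro cut_in_cuts_le[where w = w, OF sbm_weight_sym]) auto
    moreover have "X \<inter> (V - Y) \<inter> (V - Z) = X - Y - Z" using side(1) by blast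
    ultimately show "\<exists>Y Z. card Y \<le> m \<and> card Z \<le> m \<and> card Y < card X \<and> card Z < card X
        \<and> {Y, V - Y} \<in> cuts_le w V \<Psi> \<and> {Z, V - Z} \<in> cuts_le w V \<Psi>
        \<and> card (X \<inter> (V - Y) \<inter> (V - Z)) < 2"
      using \<open>card X \<le> m\<close> by (intro exI[of _ Y] exI[of _ Z]) auto
  qed
  then show ?thesis by simp
qed

lemma tangles_eq:
  assumes "0 \<le> q" "q \<le> p" "p \<le> 2 * q" "2 \<le> a"
    and tangles: "is_tangle a (cuts_le w V \<Psi>) Or1" "is_tangle a (cuts_le w V \<Psi>) Or2"
  shows "Or1 = Or2"
proof (rule orientations_eqI)
  show "is_orientation (cuts_le w V \<Psi>) Or1" "is_orientation (cuts_le w V \<Psi>) Or2"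
    using tangles unfolding is_tangle_def by blast+
next
  fix P A B assume "P \<in> cuts_le w V \<Psi>" "A \<in> P" "B \<in> P" "A \<in> Or1" "B \<in> Or2"
  note side = side_of_cuts_le(1,2)[where w = w, OF sbm_weight_sym \<open>P \<in> cuts_le w V \<Psi>\<close> \<open>A \<in> P\<close>]
  have "m < card A" "m < card B"
    using tangle_side_large[OF assms(1-4)] tangles \<open>A \<in> Or1\<close> \<open>B \<in> Or2\<close> by blast+
  moreover have "card (V - A) = 2 * m - card A"
    using side(1) card_V finite_V1 finite_V2 by (simp add: card_Diff_subset finite_subset)
  moreover have "B = A \<or> B = V - A" using \<open>B \<in> P\<close> side(2) by simp
  ultimately show "A = B" by auto
qed

end

theorem theorem3:
  fixes V1 V2 :: "'a set" and n a :: nat and p q \<Psi> :: real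
  assumes "even n"
    and "finite V1" and "finite V2" and "V1 \<inter> V2 = {}"
    and "card V1 = n div 2" and "card V2 = n div 2"
    and "0 \<le> q" and "q < p" and "p \<le> 1"
    and "a \<ge> 2" and "p < 2 * q"
  shows "\<forall>O1 O2. is_tangle a (cuts_le (sbm_weight V1 V2 p q) (V1 \<union> V2) \<Psi>) O1
                \<and> is_tangle a (cuts_le (sbm_weight V1 V2 p q) (V1 \<union> V2) \<Psi>) O2
                \<longrightarrow> O1 = O2"
proof -
  interpret two_block_graph V1 V2 "n div 2" p q
    using assms(2-6) by unfold_locales
  have "q \<le> p" "p \<le> 2 * q" using assms(8,11) by linarith+
  then show ?thesis using tangles_eq[OF assms(7) _ _ assms(10)] by blast
qed

end
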